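(* There is a constant $C_1$, independent of $n$ (it may depend on $N$, $\sigma$, $v_1,v_2$), such that for the chain started at time $0$ from an initial point $\mathbf{X}^0$ (possibly random with $\mathbb{E}|x_1^0|<\infty$, $\mathbb{E}|x_2^0|<\infty$), for all $n\ge0$, $$|\mathbb{E}x_1^n|\le|\mathbb{E}x_1^0|+C_1\|v_1\|_\infty,\qquad |\mathbb{E}x_2^n|\le|\mathbb{E}x_2^0|+C_1\|v_2\|_\infty.$$
   Context: Let $\sigma>0$. Let $v_1(t,x_2)$ and $v_2(t,x_1)$ be smooth real functions, $1$-periodic in each argument, with $\int_0^1 v_1(t,x_2)\,\mathrm{d}x_2=0$ and $\int_0^1 v_2(t,x_1)\,\mathrm{d}x_1=0$ for all $t$. Let $N\in\mathbb{N}$, $\Delta t=1/N$, $t_{n+\frac12}=(n+\frac12)\Delta t$. The numerical scheme generates the Markov chain $\mathbf{X}^n=(x_1^n,x_2^n)\in\mathbb{R}^2$ by $$x_1^{n+1}=x_1^n+v_1(t_{n+\frac12},x_2^n)\Delta t+\sigma\sqrt{\Delta t}\,\xi_1^n,\quad x_2^{n+1}=x_2^n+v_2\big(t_{n+\frac12},x_1^n+v_1(t_{n+\frac12},x_2^n)\Delta t\big)\Delta t+\sigma\sqrt{\Delta t}\,\xi_2^n,$$ where $\xi_1^n,\xi_2^n$ are i.i.d. $\mathcal{N}(0,1)$ independent of $\mathbf{X}^0$. *)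

theory Defs
  imports "HOL-Probability.Probability"
begin

text \<open>C-infinity smoothness of a real function of two real variables (t,x):
  it is continuous, both partial derivatives exist everywhere, and the partial
  derivatives are again smooth.  (Continuous partials of all orders.)\<close>
coinductive smooth2 :: "(real \<Rightarrow> real \<Rightarrow> real) \<Rightarrow> bool" where
  "\<lbrakk> continuous_on UNIV (\<lambda>p. f (fst p) (snd p));
     \<And>t x. ((\<lambda>s. f s x) has_real_derivative ft t x) (at t);
     \<And>t x. ((\<lambda>y. f t y) has_real_derivative fx t x) (at x);
     smooth2 ft; smooth2 fx \<rbrakk> \<Longrightarrow> smooth2 f"

definition supnorm2 :: "(real \<Rightarrow> real \<Rightarrow> real) \<Rightarrow> real" where
  "supnorm2 f = (SUP p\<in>(UNIV::(real\<times>real) set). \<bar>f (fst p) (snd p)\<bar>)"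

text \<open>The numerical scheme: given the initial point X0 and the noise sequence
  \<omega> n = (\<xi>_1^n, \<xi>_2^n), the state X^n.  Time step 1/N, t_{n+1/2} = (n+1/2)/N.\<close>
fun scheme :: "(real \<Rightarrow> real \<Rightarrow> real) \<Rightarrow> (real \<Rightarrow> real \<Rightarrow> real) \<Rightarrow> real \<Rightarrow> nat
    \<Rightarrow> real \<times> real \<Rightarrow> (nat \<Rightarrow> real \<times> real) \<Rightarrow> nat \<Rightarrow> real \<times> real" where
  "scheme v1 v2 \<sigma> N X0 \<omega> 0 = X0"
| "scheme v1 v2 \<sigma> N X0 \<omega> (Suc n) =
     (let (x1, x2) = scheme v1 v2 \<sigma> N X0 \<omega> n;
          dt = 1 / real N;
          t = (real n + 1/2) * dt;
          y1 = x1 + v1 t x2 * dt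
      in (y1 + \<sigma> * sqrt dt * fst (\<omega> n),
          x2 + v2 t y1 * dt + \<sigma> * sqrt dt * snd (\<omega> n)))"

definition gauss :: "real measure" where
  "gauss = density lborel std_normal_density"

definition noise_space :: "(nat \<Rightarrow> real \<times> real) measure" where
  "noise_space = PiM UNIV (\<lambda>_::nat. gauss \<Otimes>\<^sub>M gauss)"

definition chain_space :: "(real \<times> real) measure \<Rightarrow> ((real \<times> real) \<times> (nat \<Rightarrow> real \<times> real)) measure" where
  "chain_space \<mu> = \<mu> \<Otimes>\<^sub>M noise_space"

end

(*
  One step of the scheme is a pair of shears (the drift) followed by independent Gaussian
  displacements of both coordinates. On bounded functions that are 1-periodic in both variables,
  the Markov operator of a step therefore preserves the mean over the torus, and a Doeblin
  minorisation -- a Gaussian of variance s^2 has density at least phi(1/s)/s on the period cell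
  containing its centre -- makes it contract mean-zero functions in the sup norm by a factor
  q < 1 independent of time. By the Markov property, E x_i^n - E x_i^0 is dt times a sum of
  expectations of iterated transition operators applied to the drift v_i evaluated along the
  scheme, which has torus mean zero; the sum is therefore bounded by the geometric series
  dt ||v_i|| / (1 - q).
*)

theory Submission
  imports Defs
begin

section \<open>Gaussian and uniform measures on the line\<close>

lemma prob_space_gauss: "prob_space gauss"
  unfolding gauss_def by (rule prob_space_normal_density) simp

lemma sets_gauss [simp, measurable_cong]: "sets gauss = sets borel"
  unfolding gauss_def by simp

lemma integral_gauss:
  assumes [measurable]: "g \<in> borel_measurable borel"
  shows "(\<integral>x. g x \<partial>gauss) = (\<integral>x. std_normal_density x * g x \<partial>lborel)"
  unfolding gauss_def by (subst integral_density) (auto simp: normal_density_nonneg)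

lemma integrable_gauss_iff:
  assumes [measurable]: "g \<in> borel_measurable borel"
  shows "integrable gauss g \<longleftrightarrow> integrable lborel (\<lambda>x. std_normal_density x * g x)"
  unfolding gauss_def by (subst integrable_density) (auto simp: normal_density_nonneg)

lemma integrable_gauss_id: "integrable gauss (\<lambda>x. x)"
  using integrable_std_normal_moment[of 1] by (simp add: integrable_gauss_iff)

lemma integral_gauss_id: "(\<integral>x. x \<partial>gauss) = 0"
  using integral_std_normal_moment_odd[of 0] by (simp add: integral_gauss)

lemma std_normal_density_antimono:
  assumes "\<bar>a\<bar> \<le> b"
  shows "std_normal_density b \<le> std_normal_density a"
proof -
  have "a\<^sup>2 \<le> b\<^sup>2"
    using assms by (metis abs_le_square_iff abs_of_nonneg abs_ge_zero order_trans)
  then show ?thesis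
    unfolding std_normal_density_def by (simp add: divide_right_mono)
qed

lemma std_normal_density_ge_on_unit_cell:
  fixes u a s :: real
  assumes s: "s > 0"
    and "real_of_int \<lfloor>u\<rfloor> \<le> u + s * a" and "u + s * a < real_of_int \<lfloor>u\<rfloor> + 1"
  shows "std_normal_density (1/s) \<le> std_normal_density a"
proof -
  have "real_of_int \<lfloor>u\<rfloor> \<le> u" "u < real_of_int \<lfloor>u\<rfloor> + 1"
    by linarith+
  with assms(2,3) have "\<bar>s * a\<bar> \<le> 1"
    by linarith
  with s have "\<bar>a\<bar> \<le> 1/s"
    by (auto simp: field_simps abs_mult)
  then show ?thesis
    by (rule std_normal_density_antimono)
qed

definition unif01 :: "real measure" where
  "unif01 = density lborel (\<lambda>x. ennreal (indicator {0..<1} x))"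

lemma sets_unif01 [simp, measurable_cong]: "sets unif01 = sets borel"
  unfolding unif01_def by simp

lemma integral_unif01:
  fixes g :: "real \<Rightarrow> real"
  assumes [measurable]: "g \<in> borel_measurable borel"
  shows "(\<integral>x. g x \<partial>unif01) = (\<integral>x. indicator {0..<1} x * g x \<partial>lborel)"
  unfolding unif01_def using integral_density[of g lborel "indicator {0..<1}"] by simp

lemma prob_space_unif01: "prob_space unif01"
proof
  have "emeasure unif01 (space unif01) = emeasure lborel {0..<1::real}"
    unfolding unif01_def by (simp add: emeasure_density nn_integral_indicator ennreal_indicator)
  then show "emeasure unif01 (space unif01) = 1" by simp
qed

interpretation Gauss: prob_space gauss by (rule prob_space_gauss)
interpretation Unif: prob_space unif01 by (rule prob_space_unif01)
interpretation Unif2: pair_prob_space unif01 unif01 ..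
interpretation Unif_Gauss: pair_prob_space unif01 gauss ..
interpretation Gauss2: pair_prob_space gauss gauss ..

declare Gauss.prob_space [simp] Unif.prob_space [simp]

lemma (in prob_space) integrable_bounded:
  fixes f :: "'a \<Rightarrow> real"
  assumes "f \<in> borel_measurable M" and "\<And>x. x \<in> space M \<Longrightarrow> \<bar>f x\<bar> \<le> B"
  shows "integrable M f"
  using assms by (intro integrable_const_bound[where B=B]) auto

lemma (in prob_space) abs_integral_le_bound:
  fixes f :: "'a \<Rightarrow> real"
  assumes "f \<in> borel_measurable M" and bound: "\<And>x. x \<in> space M \<Longrightarrow> \<bar>f x\<bar> \<le> B"
  shows "\<bar>\<integral>x. f x \<partial>M\<bar> \<le> B"
proof -
  have "\<bar>\<integral>x. f x \<partial>M\<bar> \<le> (\<integral>x. \<bar>f x\<bar> \<partial>M)"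
    by (rule integral_abs_bound)
  also have "\<dots> \<le> B"
    using integrable_bounded[OF assms] bound by (intro integral_le_const) (auto intro!: AE_I2)
  finally show ?thesis .
qed

lemma (in prob_space) distr_pair_snd:
  assumes "sigma_finite_measure N"
  shows "distr (M \<Otimes>\<^sub>M N) N snd = N"
proof (intro measure_eqI)
  fix A assume A: "A \<in> sets (distr (M \<Otimes>\<^sub>M N) N snd)"
  then have "emeasure (distr (M \<Otimes>\<^sub>M N) N snd) A = emeasure (M \<Otimes>\<^sub>M N) (space M \<times> A)"
    by (auto simp: emeasure_distr space_pair_measure dest: sets.sets_into_space
             intro!: arg_cong2[where f=emeasure])
  also have "\<dots> = emeasure M (space M) * emeasure N A"
    using A by (intro sigma_finite_measure.emeasure_pair_measure_Times[OF assms]) auto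
  finally show "emeasure (distr (M \<Otimes>\<^sub>M N) N snd) A = emeasure N A"
    by (simp add: emeasure_space_1)
qed simp

lemma (in pair_prob_space) integrable_pair_fst:
  fixes g :: "'a \<Rightarrow> real"
  assumes "integrable M1 g"
  shows "integrable (M1 \<Otimes>\<^sub>M M2) (\<lambda>p. g (fst p))"
  using assms integrable_distr_eq[of fst "M1 \<Otimes>\<^sub>M M2" M1 g] M2.distr_pair_fst[of M1] by simp

lemma (in pair_prob_space) integrable_pair_snd:
  fixes g :: "'b \<Rightarrow> real"
  assumes "integrable M2 g"
  shows "integrable (M1 \<Otimes>\<^sub>M M2) (\<lambda>p. g (snd p))"
  using assms integrable_distr_eq[of snd "M1 \<Otimes>\<^sub>M M2" M2 g]
    M1.distr_pair_snd[OF M2.sigma_finite_measure_axioms] by simp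

lemma integrable_indicator_mult_bounded:
  fixes h :: "real \<Rightarrow> real"
  assumes [measurable]: "h \<in> borel_measurable borel" and bound: "\<And>x. \<bar>h x\<bar> \<le> B"
  shows "integrable lborel (\<lambda>x. indicator {a..<b} x * h x)"
proof (rule Bochner_Integration.integrable_bound)
  have "emeasure lborel {a..<b} < \<infinity>"
    by (cases "a \<le> b") (auto simp: ennreal_less_top)
  then show "integrable lborel (\<lambda>x. B * indicator {a..<b} x)"
    by (intro integrable_mult_right integrable_real_indicator) auto
  show "AE x in lborel. norm (indicator {a..<b} x * h x) \<le> norm (B * indicator {a..<b} x)"
    using bound by (auto simp: indicator_def abs_mult intro: order_trans[OF _ abs_ge_self])
qed auto

lemma periodic_add_of_int:
  fixes h :: "real \<Rightarrow> 'a"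
  assumes per: "\<And>x. h (x + 1) = h x"
  shows "h (x + real_of_int k) = h x"
proof -
  have nat: "h (y + real n) = h y" for y n
  proof (induction n)
    case (Suc n)
    then show ?case using per[of "y + real n"] by (simp add: algebra_simps)
  qed simp
  show ?thesis
  proof (cases "k \<ge> 0")
    case True
    then show ?thesis using nat[of x "nat k"] by simp
  next
    case False
    then show ?thesis using nat[of "x + real_of_int k" "nat (-k)"] by simp
  qed
qed

lemma integral_unif01_shift:
  fixes h :: "real \<Rightarrow> real"
  assumes [measurable]: "h \<in> borel_measurable borel" and bound: "\<And>x. \<bar>h x\<bar> \<le> B"
    and per: "\<And>x. h (x + 1) = h x"
  shows "(\<integral>x. h (x + c) \<partial>unif01) = (\<integral>x. h x \<partial>unif01)"
proof -
  define r where "r = c - of_int \<lfloor>c\<rfloor>"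
  have r: "0 \<le> r" "r < 1" unfolding r_def by linarith+
  note integrable = integrable_indicator_mult_bounded[OF _ bound]
  have "(\<integral>x. h (x + c) \<partial>unif01) = (\<integral>x. h (x + r) \<partial>unif01)"
    using periodic_add_of_int[of h, OF per, of "_ + r" "\<lfloor>c\<rfloor>"]
    by (intro Bochner_Integration.integral_cong) (auto simp: r_def algebra_simps)
  also have "\<dots> = (\<integral>x. indicator {0..<1} x * h (x + r) \<partial>lborel)"
    by (simp add: integral_unif01)
  also have "\<dots> = (\<integral>y. indicator {r..<1+r} y * h y \<partial>lborel)"
    by (subst lborel_integral_real_affine[where c=1 and t=r])
       (auto simp: indicator_def algebra_simps intro!: Bochner_Integration.integral_cong)
  also have "\<dots> = (\<integral>y. indicator {r..<1} y * h y + indicator {1..<1+r} y * h y \<partial>lborel)"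
    using r by (intro Bochner_Integration.integral_cong) (auto simp: indicator_def)
  also have "\<dots> = (\<integral>y. indicator {r..<1} y * h y \<partial>lborel) + (\<integral>y. indicator {1..<1+r} y * h y \<partial>lborel)"
    by (intro Bochner_Integration.integral_add integrable) auto
  also have "(\<integral>y. indicator {1..<1+r} y * h y \<partial>lborel) = (\<integral>y. indicator {0..<r} y * h y \<partial>lborel)"
    by (subst lborel_integral_real_affine[where c=1 and t=1])
       (auto simp: indicator_def algebra_simps per intro!: Bochner_Integration.integral_cong)
  also have "(\<integral>y. indicator {r..<1} y * h y \<partial>lborel) + (\<integral>y. indicator {0..<r} y * h y \<partial>lborel)
      = (\<integral>y. indicator {r..<1} y * h y + indicator {0..<r} y * h y \<partial>lborel)"
    by (intro Bochner_Integration.integral_add[symmetric] integrable) auto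
  also have "\<dots> = (\<integral>y. indicator {0..<1} y * h y \<partial>lborel)"
    using r by (intro Bochner_Integration.integral_cong) (auto simp: indicator_def)
  also have "\<dots> = (\<integral>x. h x \<partial>unif01)"
    by (simp add: integral_unif01)
  finally show ?thesis .
qed

lemma integral_period_cell:
  fixes g :: "real \<Rightarrow> real"
  assumes [measurable]: "g \<in> borel_measurable borel" and per: "\<And>x. g (x + 1) = g x"
  shows "(\<integral>y. indicator {real_of_int k..<real_of_int k + 1} y * g y \<partial>lborel) = (\<integral>x. g x \<partial>unif01)"
  unfolding integral_unif01[OF assms(1)]
  using periodic_add_of_int[of g, OF per, of _ k]
  by (subst lborel_integral_real_affine[where c=1 and t="real_of_int k"])
     (auto simp: indicator_def algebra_simps intro!: Bochner_Integration.integral_cong)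

lemma gauss_shift_ge_uniform_mean:
  fixes g :: "real \<Rightarrow> real"
  assumes [measurable]: "g \<in> borel_measurable borel"
    and nonneg: "\<And>x. 0 \<le> g x" and bound: "\<And>x. g x \<le> B"
    and per: "\<And>x. g (x + 1) = g x" and s: "s > 0"
  shows "std_normal_density (1/s) / s * (\<integral>x. g x \<partial>unif01) \<le> (\<integral>a. g (u + s * a) \<partial>gauss)"
proof -
  \<comment> \<open>\<open>a \<mapsto> u + s * a\<close> maps \<open>I\<close> onto the period cell containing \<open>u\<close>; there \<open>\<bar>a\<bar> \<le> 1/s\<close>\<close>
  define k where "k = \<lfloor>u\<rfloor>"
  define I where "I = {(real_of_int k - u) / s..<(real_of_int k + 1 - u) / s}"
  define d where "d = std_normal_density (1/s)"
  have abs_bound: "\<bar>g x\<bar> \<le> B" for x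
    using nonneg[of x] bound[of x] by simp
  have "(\<integral>x. g x \<partial>unif01) = (\<integral>y. indicator {real_of_int k..<real_of_int k + 1} y * g y \<partial>lborel)"
    by (rule integral_period_cell[symmetric]) (auto simp: per)
  also have "\<dots> = s * (\<integral>a. indicator I a * g (u + s * a) \<partial>lborel)"
    using s
    by (subst lborel_integral_real_affine[where c=s and t=u])
       (auto simp: indicator_def I_def field_simps intro!: Bochner_Integration.integral_cong)
  finally have "d / s * (\<integral>x. g x \<partial>unif01) = (\<integral>a. indicator I a * (d * g (u + s * a)) \<partial>lborel)"
    using s by (simp add: mult.left_commute)
  also have "\<dots> \<le> (\<integral>a. std_normal_density a * g (u + s * a) \<partial>lborel)"
  proof (rule integral_mono)
    show "integrable lborel (\<lambda>a. indicator I a * (d * g (u + s * a)))"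
      unfolding I_def using abs_bound
      by (intro integrable_indicator_mult_bounded[where B="d * B"])
         (auto simp: d_def abs_mult normal_density_nonneg intro!: mult_left_mono)
    have "integrable gauss (\<lambda>a. g (u + s * a))"
      using abs_bound by (intro Gauss.integrable_bounded) auto
    then show "integrable lborel (\<lambda>a. std_normal_density a * g (u + s * a))"
      by (simp add: integrable_gauss_iff)
  next
    fix a
    show "indicator I a * (d * g (u + s * a)) \<le> std_normal_density a * g (u + s * a)"
    proof (cases "a \<in> I")
      case True
      with s have "real_of_int \<lfloor>u\<rfloor> \<le> u + s * a" "u + s * a < real_of_int \<lfloor>u\<rfloor> + 1"
        unfolding I_def k_def by (auto simp: field_simps)
      with s have "d \<le> std_normal_density a"
        unfolding d_def by (rule std_normal_density_ge_on_unit_cell)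
      then show ?thesis
        using True nonneg by (auto intro!: mult_right_mono)
    qed (auto simp: nonneg normal_density_nonneg)
  qed
  also have "\<dots> = (\<integral>a. g (u + s * a) \<partial>gauss)"
    by (simp add: integral_gauss)
  finally show ?thesis unfolding d_def .
qed

section \<open>Periodic functions on the torus and Gaussian smoothing\<close>

definition torus_bounded :: "real \<Rightarrow> (real \<times> real \<Rightarrow> real) \<Rightarrow> bool" where
  "torus_bounded B f \<longleftrightarrow> f \<in> borel_measurable (borel \<Otimes>\<^sub>M borel)
     \<and> (\<forall>x1 x2. f (x1 + 1, x2) = f (x1, x2)) \<and> (\<forall>x1 x2. f (x1, x2 + 1) = f (x1, x2))
     \<and> (\<forall>x. \<bar>f x\<bar> \<le> B)"

definition torus_mean :: "(real \<times> real \<Rightarrow> real) \<Rightarrow> real" where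
  "torus_mean f = (\<integral>x2. (\<integral>x1. f (x1, x2) \<partial>unif01) \<partial>unif01)"

definition gauss_conv1 :: "real \<Rightarrow> (real \<times> real \<Rightarrow> real) \<Rightarrow> real \<times> real \<Rightarrow> real" where
  "gauss_conv1 s f x = (\<integral>a. f (fst x + s * a, snd x) \<partial>gauss)"

definition gauss_conv2 :: "real \<Rightarrow> (real \<times> real \<Rightarrow> real) \<Rightarrow> real \<times> real \<Rightarrow> real" where
  "gauss_conv2 s f x = (\<integral>b. f (fst x, snd x + s * b) \<partial>gauss)"

lemma torus_boundedD:
  assumes "torus_bounded B f"
  shows "f \<in> borel_measurable (borel \<Otimes>\<^sub>M borel)" "\<And>x1 x2. f (x1 + 1, x2) = f (x1, x2)"
    "\<And>x1 x2. f (x1, x2 + 1) = f (x1, x2)" "\<And>x. \<bar>f x\<bar> \<le> B"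
  using assms unfolding torus_bounded_def by auto

lemma torus_bounded_nonneg: "torus_bounded B f \<Longrightarrow> 0 \<le> B"
  using torus_boundedD(4)[of B f 0] by simp

lemma torus_bounded_affine:
  assumes "torus_bounded B f"
  shows "torus_bounded (\<bar>a\<bar> + \<bar>b\<bar> * B) (\<lambda>x. a + b * f x)"
proof -
  note f = torus_boundedD[OF assms]
  have [measurable]: "f \<in> borel_measurable (borel \<Otimes>\<^sub>M borel)" by (rule f(1))
  have "\<bar>a + b * f x\<bar> \<le> \<bar>a\<bar> + \<bar>b\<bar> * B" for x
    using f(4)[of x] by (auto simp: abs_mult intro!: order_trans[OF abs_triangle_ineq] mult_left_mono)
  then show ?thesis unfolding torus_bounded_def using f by auto
qed

lemma torus_mean_swap:
  assumes "torus_bounded B f"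
  shows "torus_mean f = (\<integral>x1. (\<integral>x2. f (x1, x2) \<partial>unif01) \<partial>unif01)"
proof -
  note f = torus_boundedD[OF assms]
  have [measurable]: "f \<in> borel_measurable (unif01 \<Otimes>\<^sub>M unif01)"
    using f(1) by (simp cong: measurable_cong_sets)
  have "integrable (unif01 \<Otimes>\<^sub>M unif01) (case_prod (\<lambda>x1 x2. f (x1, x2)))"
    using f(4) by (intro Unif2.integrable_bounded[where B=B]) auto
  from Unif2.Fubini_integral[OF this] show ?thesis
    unfolding torus_mean_def by simp
qed

lemma torus_mean_affine:
  assumes "torus_bounded B f"
  shows "torus_mean (\<lambda>x. a + b * f x) = a + b * torus_mean f"
proof -
  note f = torus_boundedD[OF assms]
  have [measurable]: "f \<in> borel_measurable (borel \<Otimes>\<^sub>M borel)" by (rule f(1))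
  have inner: "integrable unif01 (\<lambda>x1. f (x1, x2))" for x2
    using f(4) by (intro Unif.integrable_bounded[where B=B]) auto
  have "integrable unif01 (\<lambda>x2. \<integral>x1. f (x1, x2) \<partial>unif01)"
    using f(4) by (intro Unif.integrable_bounded[where B=B] Unif.abs_integral_le_bound) auto
  then show ?thesis
    unfolding torus_mean_def using inner by simp
qed

lemma torus_bounded_gauss_conv1:
  assumes "torus_bounded B f"
  shows "torus_bounded B (gauss_conv1 s f)"
proof -
  note f = torus_boundedD[OF assms]
  have [measurable]: "f \<in> borel_measurable (borel \<Otimes>\<^sub>M borel)" by (rule f(1))
  have "gauss_conv1 s f (x1 + 1, x2) = gauss_conv1 s f (x1, x2)" for x1 x2
    unfolding gauss_conv1_def using f(2)[of "x1 + s * _" x2]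
    by (intro Bochner_Integration.integral_cong) (auto simp: algebra_simps)
  moreover have "\<bar>gauss_conv1 s f x\<bar> \<le> B" for x
    unfolding gauss_conv1_def using f(4) by (intro Gauss.abs_integral_le_bound) auto
  moreover have "gauss_conv1 s f \<in> borel_measurable (borel \<Otimes>\<^sub>M borel)"
    unfolding gauss_conv1_def by measurable
  ultimately show ?thesis
    unfolding torus_bounded_def using f(3) by (auto simp: gauss_conv1_def)
qed

lemma torus_bounded_gauss_conv2:
  assumes "torus_bounded B f"
  shows "torus_bounded B (gauss_conv2 s f)"
proof -
  note f = torus_boundedD[OF assms]
  have [measurable]: "f \<in> borel_measurable (borel \<Otimes>\<^sub>M borel)" by (rule f(1))
  have "gauss_conv2 s f (x1, x2 + 1) = gauss_conv2 s f (x1, x2)" for x1 x2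
    unfolding gauss_conv2_def using f(3)[of x1 "x2 + s * _"]
    by (intro Bochner_Integration.integral_cong) (auto simp: algebra_simps)
  moreover have "\<bar>gauss_conv2 s f x\<bar> \<le> B" for x
    unfolding gauss_conv2_def using f(4) by (intro Gauss.abs_integral_le_bound) auto
  moreover have "gauss_conv2 s f \<in> borel_measurable (borel \<Otimes>\<^sub>M borel)"
    unfolding gauss_conv2_def by measurable
  ultimately show ?thesis
    unfolding torus_bounded_def using f(2) by (auto simp: gauss_conv2_def)
qed

lemma integral_unif01_gauss_shift:
  fixes h :: "real \<Rightarrow> real"
  assumes [measurable]: "h \<in> borel_measurable borel" and bound: "\<And>x. \<bar>h x\<bar> \<le> B"
    and per: "\<And>x. h (x + 1) = h x"
  shows "(\<integral>x. (\<integral>a. h (x + s * a) \<partial>gauss) \<partial>unif01) = (\<integral>x. h x \<partial>unif01)"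
proof -
  have "integrable (unif01 \<Otimes>\<^sub>M gauss) (case_prod (\<lambda>x a. h (x + s * a)))"
    using bound by (intro Unif_Gauss.integrable_bounded[where B=B]) auto
  from Unif_Gauss.Fubini_integral[OF this]
  have "(\<integral>x. (\<integral>a. h (x + s * a) \<partial>gauss) \<partial>unif01) = (\<integral>a. (\<integral>x. h (x + s * a) \<partial>unif01) \<partial>gauss)"
    by simp
  also have "\<dots> = (\<integral>x. h x \<partial>unif01)"
    using integral_unif01_shift[OF assms] by simp
  finally show ?thesis .
qed

lemma torus_mean_gauss_conv1:
  assumes "torus_bounded B f"
  shows "torus_mean (gauss_conv1 s f) = torus_mean f"
proof -
  note f = torus_boundedD[OF assms]
  have [measurable]: "f \<in> borel_measurable (borel \<Otimes>\<^sub>M borel)" by (rule f(1))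
  show ?thesis
    unfolding torus_mean_def gauss_conv1_def
    using integral_unif01_gauss_shift[of "\<lambda>x1. f (x1, _)" B s] f(2,4) by simp
qed

lemma torus_mean_gauss_conv2:
  assumes "torus_bounded B f"
  shows "torus_mean (gauss_conv2 s f) = torus_mean f"
proof -
  note f = torus_boundedD[OF assms]
  have [measurable]: "f \<in> borel_measurable (borel \<Otimes>\<^sub>M borel)" by (rule f(1))
  show ?thesis
    unfolding torus_mean_swap[OF torus_bounded_gauss_conv2[OF assms]] torus_mean_swap[OF assms]
    unfolding gauss_conv2_def
    using integral_unif01_gauss_shift[of "\<lambda>x2. f (_, x2)" B s] f(3,4) by simp
qed

lemma gauss_conv_affine:
  assumes "torus_bounded B f"
  shows "gauss_conv1 s (gauss_conv2 s (\<lambda>x. a + b * f x)) z = a + b * gauss_conv1 s (gauss_conv2 s f) z"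
proof -
  note f = torus_boundedD[OF assms]
  have [measurable]: "f \<in> borel_measurable (borel \<Otimes>\<^sub>M borel)" by (rule f(1))
  have "integrable gauss (\<lambda>c. f (x1, x2 + s * c))" for x1 x2
    using f(4) by (intro Gauss.integrable_bounded[where B=B]) auto
  then have conv2: "gauss_conv2 s (\<lambda>x. a + b * f x) = (\<lambda>x. a + b * gauss_conv2 s f x)"
    unfolding gauss_conv2_def by (auto simp: fun_eq_iff)
  note f2 = torus_boundedD[OF torus_bounded_gauss_conv2[OF assms, of s]]
  have [measurable]: "gauss_conv2 s f \<in> borel_measurable (borel \<Otimes>\<^sub>M borel)" by (rule f2(1))
  have "integrable gauss (\<lambda>c. gauss_conv2 s f (x1 + s * c, x2))" for x1 x2
    using f2(4) by (intro Gauss.integrable_bounded[where B=B]) auto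
  then show ?thesis
    unfolding conv2 gauss_conv1_def by simp
qed

lemma gauss_conv_ge_torus_mean:
  assumes f: "torus_bounded B f" and nonneg: "\<And>x. 0 \<le> f x" and s: "s > 0"
  shows "(std_normal_density (1/s) / s)\<^sup>2 * torus_mean f \<le> gauss_conv1 s (gauss_conv2 s f) z"
proof -
  note f' = torus_boundedD[OF f]
  have [measurable]: "f \<in> borel_measurable (borel \<Otimes>\<^sub>M borel)" by (rule f'(1))
  define d where "d = std_normal_density (1/s) / s"
  have d: "d \<ge> 0" unfolding d_def using s by (simp add: normal_density_nonneg)
  define G where "G y = (\<integral>x2. f (y, x2) \<partial>unif01)" for y
  have [measurable]: "G \<in> borel_measurable borel" unfolding G_def by measurable
  have G_nonneg: "0 \<le> G y" for y unfolding G_def using nonneg by simp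
  have G_bound: "G y \<le> B" for y
    unfolding G_def using f'(4) Unif.abs_integral_le_bound[of "\<lambda>x2. f (y, x2)" B] by auto
  have G_per: "G (y + 1) = G y" for y unfolding G_def using f'(2) by simp
  have conv2_ge: "d * G y \<le> gauss_conv2 s f (y, w)" for y w
    unfolding d_def G_def gauss_conv2_def using nonneg f'(3,4) s
    using gauss_shift_ge_uniform_mean[of "\<lambda>x2. f (y, x2)" B s w] by (auto simp: abs_le_iff)
  note f2 = torus_boundedD[OF torus_bounded_gauss_conv2[OF f, of s]]
  have [measurable]: "gauss_conv2 s f \<in> borel_measurable (borel \<Otimes>\<^sub>M borel)" by (rule f2(1))
  have "d * d * torus_mean f = d * (d * (\<integral>y. G y \<partial>unif01))"
    unfolding torus_mean_swap[OF f] G_def by simp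
  also have "\<dots> \<le> d * (\<integral>a. G (fst z + s * a) \<partial>gauss)"
    using gauss_shift_ge_uniform_mean[of G B s "fst z"] G_nonneg G_bound G_per s d
    unfolding d_def by (intro mult_left_mono) auto
  also have "\<dots> = (\<integral>a. d * G (fst z + s * a) \<partial>gauss)" by simp
  also have "\<dots> \<le> (\<integral>a. gauss_conv2 s f (fst z + s * a, snd z) \<partial>gauss)"
  proof (rule integral_mono)
    show "integrable gauss (\<lambda>a. d * G (fst z + s * a))"
      using G_nonneg G_bound d
      by (intro Gauss.integrable_bounded[where B="d * B"]) (auto simp: abs_mult intro!: mult_left_mono)
    show "integrable gauss (\<lambda>a. gauss_conv2 s f (fst z + s * a, snd z))"
      using f2(4) by (intro Gauss.integrable_bounded[where B=B]) auto
  qed (rule conv2_ge)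
  also have "\<dots> = gauss_conv1 s (gauss_conv2 s f) z"
    unfolding gauss_conv1_def by simp
  finally show ?thesis unfolding d_def by (simp add: power2_eq_square)
qed

text \<open>Capped at \<open>1/2\<close> so that the contraction rate \<open>1 - doeblin_const s\<close> stays nonnegative.\<close>

definition doeblin_const :: "real \<Rightarrow> real" where
  "doeblin_const s = min ((std_normal_density (1/s) / s)\<^sup>2) (1/2)"

lemma doeblin_const_pos: "s > 0 \<Longrightarrow> 0 < doeblin_const s"
  unfolding doeblin_const_def by (auto simp: std_normal_density_def)

lemma doeblin_const_le_half: "doeblin_const s \<le> 1/2"
  unfolding doeblin_const_def by simp

lemma gauss_conv_contraction:
  assumes f: "torus_bounded B f" and mean: "torus_mean f = 0" and s: "s > 0"
  shows "\<bar>gauss_conv1 s (gauss_conv2 s f) z\<bar> \<le> (1 - doeblin_const s) * B"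
proof -
  have B: "0 \<le> B" by (rule torus_bounded_nonneg[OF f])
  have f_bound: "-B \<le> f x \<and> f x \<le> B" for x
    using torus_boundedD(4)[OF f, of x] by auto
  define F where "F = gauss_conv1 s (gauss_conv2 s f) z"
  define d where "d = (std_normal_density (1/s) / s)\<^sup>2"
  have "d * torus_mean (\<lambda>x. B + b * f x) \<le> gauss_conv1 s (gauss_conv2 s (\<lambda>x. B + b * f x)) z"
    if b: "b = 1 \<or> b = -1" for b
    unfolding d_def
  proof (rule gauss_conv_ge_torus_mean[OF torus_bounded_affine[OF f] _ s])
    show "0 \<le> B + b * f x" for x
      using f_bound[of x] b by auto
  qed
  from this[of 1] this[of "-1"]
  have "d * B \<le> B + F" "d * B \<le> B - F"
    using torus_mean_affine[OF f, of B 1] gauss_conv_affine[OF f, of s B 1]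
      torus_mean_affine[OF f, of B "-1"] gauss_conv_affine[OF f, of s B "-1"] mean
    unfolding F_def by simp_all
  moreover have "doeblin_const s * B \<le> d * B"
    unfolding doeblin_const_def d_def using B by (intro mult_right_mono) auto
  ultimately show ?thesis
    unfolding F_def by (auto simp: algebra_simps abs_le_iff)
qed

definition shear1 :: "(real \<Rightarrow> real) \<Rightarrow> real \<times> real \<Rightarrow> real \<times> real" where
  "shear1 v x = (fst x + v (snd x), snd x)"

definition shear2 :: "(real \<Rightarrow> real) \<Rightarrow> real \<times> real \<Rightarrow> real \<times> real" where
  "shear2 v x = (fst x, snd x + v (fst x))"

lemma measurable_shear1:
  assumes [measurable]: "v \<in> borel_measurable borel"
  shows "shear1 v \<in> measurable (borel \<Otimes>\<^sub>M borel) (borel \<Otimes>\<^sub>M borel)"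
  unfolding shear1_def by measurable

lemma measurable_shear2:
  assumes [measurable]: "v \<in> borel_measurable borel"
  shows "shear2 v \<in> measurable (borel \<Otimes>\<^sub>M borel) (borel \<Otimes>\<^sub>M borel)"
  unfolding shear2_def by measurable

lemma torus_bounded_shear1:
  assumes f: "torus_bounded B f" and [measurable]: "v \<in> borel_measurable borel"
    and per: "\<And>y. v (y + 1) = v y"
  shows "torus_bounded B (\<lambda>x. f (shear1 v x))"
proof -
  note f' = torus_boundedD[OF f]
  have [measurable]: "f \<in> borel_measurable (borel \<Otimes>\<^sub>M borel)" by (rule f'(1))
  have "f (x1 + 1 + v x2, x2) = f (x1 + v x2, x2)" for x1 x2
    using f'(2)[of "x1 + v x2" x2] by (simp add: algebra_simps)
  then show ?thesis
    unfolding torus_bounded_def shear1_def using f' per by auto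
qed

lemma torus_bounded_shear2:
  assumes f: "torus_bounded B f" and [measurable]: "v \<in> borel_measurable borel"
    and per: "\<And>y. v (y + 1) = v y"
  shows "torus_bounded B (\<lambda>x. f (shear2 v x))"
proof -
  note f' = torus_boundedD[OF f]
  have [measurable]: "f \<in> borel_measurable (borel \<Otimes>\<^sub>M borel)" by (rule f'(1))
  have "f (x1, x2 + 1 + v x1) = f (x1, x2 + v x1)" for x1 x2
    using f'(3)[of x1 "x2 + v x1"] by (simp add: algebra_simps)
  then show ?thesis
    unfolding torus_bounded_def shear2_def using f' per by auto
qed

lemma torus_mean_shear1:
  assumes f: "torus_bounded B f"
  shows "torus_mean (\<lambda>x. f (shear1 v x)) = torus_mean f"
proof -
  note f' = torus_boundedD[OF f]
  have [measurable]: "f \<in> borel_measurable (borel \<Otimes>\<^sub>M borel)" by (rule f'(1))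
  show ?thesis
    unfolding torus_mean_def shear1_def
    using integral_unif01_shift[of "\<lambda>x1. f (x1, _)" B "v _"] f'(2,4) by simp
qed

lemma torus_mean_shear2:
  assumes f: "torus_bounded B f" and [measurable]: "v \<in> borel_measurable borel"
    and per: "\<And>y. v (y + 1) = v y"
  shows "torus_mean (\<lambda>x. f (shear2 v x)) = torus_mean f"
proof -
  note f' = torus_boundedD[OF f]
  have [measurable]: "f \<in> borel_measurable (borel \<Otimes>\<^sub>M borel)" by (rule f'(1))
  show ?thesis
    unfolding torus_mean_swap[OF torus_bounded_shear2[OF assms]] torus_mean_swap[OF f]
    unfolding shear2_def
    using integral_unif01_shift[of "\<lambda>x2. f (_, x2)" B "v _"] f'(3,4) by simp
qed

interpretation Noise: sequence_space "gauss \<Otimes>\<^sub>M gauss" ..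
interpretation Gauss2_Noise: pair_prob_space "gauss \<Otimes>\<^sub>M gauss" Noise.S ..

declare Noise.P.prob_space [simp]

lemma noise_space_eq: "noise_space = Noise.S"
  unfolding noise_space_def by simp

lemma
  assumes "L \<in> {fst, snd}"
  shows integrable_gauss2_coord: "integrable (gauss \<Otimes>\<^sub>M gauss) L"
    and integral_gauss2_coord: "(\<integral>w. L w \<partial>(gauss \<Otimes>\<^sub>M gauss)) = 0"
proof -
  have L_cases: "L = fst \<or> L = snd"
    using assms by simp
  then have L_meas: "L \<in> measurable (gauss \<Otimes>\<^sub>M gauss) gauss"
    using measurable_fst measurable_snd by blast
  have "distr (gauss \<Otimes>\<^sub>M gauss) gauss L = gauss"
    using L_cases Gauss.distr_pair_fst Gauss.distr_pair_snd[OF Gauss.sigma_finite_measure_axioms]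
    by blast
  then show "integrable (gauss \<Otimes>\<^sub>M gauss) L" "(\<integral>w. L w \<partial>(gauss \<Otimes>\<^sub>M gauss)) = 0"
    using integrable_gauss_id integral_gauss_id
      integrable_distr_eq[OF L_meas, of "\<lambda>x. x"] integral_distr[OF L_meas, of "\<lambda>x. x"]
    by simp_all
qed

lemma
  assumes L: "L \<in> {fst, snd}"
  shows integrable_noise_coord: "integrable Noise.S (\<lambda>\<omega>. L (\<omega> k))"
    and integral_noise_coord: "(\<integral>\<omega>. L (\<omega> k) \<partial>Noise.S) = 0"
proof -
  have L_meas: "L \<in> borel_measurable (gauss \<Otimes>\<^sub>M gauss)"
    using L measurable_fst[of gauss gauss] measurable_snd[of gauss gauss]
    unfolding measurable_cong_sets[OF refl sets_gauss] by blast
  have k_meas: "(\<lambda>\<omega>. \<omega> k) \<in> measurable Noise.S (gauss \<Otimes>\<^sub>M gauss)"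
    by (rule measurable_component_singleton) simp
  have component: "distr Noise.S (gauss \<Otimes>\<^sub>M gauss) (\<lambda>\<omega>. \<omega> k) = gauss \<Otimes>\<^sub>M gauss"
    by (rule Noise.PiM_component) simp
  show "integrable Noise.S (\<lambda>\<omega>. L (\<omega> k))"
    using integrable_distr_eq[OF k_meas L_meas] integrable_gauss2_coord[OF L]
    unfolding component by blast
  have "(\<integral>\<omega>. L (\<omega> k) \<partial>Noise.S) = (\<integral>w. L w \<partial>(gauss \<Otimes>\<^sub>M gauss))"
    using integral_distr[OF k_meas L_meas] unfolding component by (rule sym)
  then show "(\<integral>\<omega>. L (\<omega> k) \<partial>Noise.S) = 0"
    using integral_gauss2_coord[OF L] by (rule trans)
qed

section \<open>The Markov operator of the scheme\<close>

locale split_step_scheme =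
  fixes v1 v2 :: "real \<Rightarrow> real \<Rightarrow> real" and dt s V1 V2 :: real
  assumes dt_pos: "dt > 0" and s_pos: "s > 0"
    and measurable_v1: "\<And>t. v1 t \<in> borel_measurable borel"
    and measurable_v2: "\<And>t. v2 t \<in> borel_measurable borel"
    and v1_periodic: "\<And>t x. v1 t (x + 1) = v1 t x"
    and v2_periodic: "\<And>t x. v2 t (x + 1) = v2 t x"
    and v1_bound: "\<And>t x. \<bar>v1 t x\<bar> \<le> V1"
    and v2_bound: "\<And>t x. \<bar>v2 t x\<bar> \<le> V2"
    and v1_mean: "\<And>t. (\<integral>x. v1 t x \<partial>unif01) = 0"
    and v2_mean: "\<And>t. (\<integral>x. v2 t x \<partial>unif01) = 0"
begin

declare measurable_v1 [measurable] measurable_v2 [measurable]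

definition half_time :: "nat \<Rightarrow> real" where
  "half_time j = (real j + 1/2) * dt"

definition shear_step :: "real \<Rightarrow> real \<times> real \<Rightarrow> real \<times> real" where
  "shear_step t x = shear2 (\<lambda>y. v2 t y * dt) (shear1 (\<lambda>y. v1 t y * dt) x)"

definition step :: "real \<Rightarrow> real \<times> real \<Rightarrow> real \<times> real \<Rightarrow> real \<times> real" where
  "step t x w = (fst (shear_step t x) + s * fst w, snd (shear_step t x) + s * snd w)"

definition transition :: "real \<Rightarrow> (real \<times> real \<Rightarrow> real) \<Rightarrow> real \<times> real \<Rightarrow> real" where
  "transition t f x = (\<integral>w. f (step t x w) \<partial>(gauss \<Otimes>\<^sub>M gauss))"

definition contraction_rate :: real where
  "contraction_rate = 1 - doeblin_const s"

lemma measurable_shear_step [measurable]: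
  "shear_step t \<in> measurable (borel \<Otimes>\<^sub>M borel) (borel \<Otimes>\<^sub>M borel)"
  unfolding shear_step_def
  by (intro measurable_compose[OF measurable_shear1 measurable_shear2]) measurable

lemma measurable_step [measurable (raw)]:
  assumes [measurable]: "f \<in> measurable M (borel \<Otimes>\<^sub>M borel)" "g \<in> measurable M (borel \<Otimes>\<^sub>M borel)"
  shows "(\<lambda>x. step t (f x) (g x)) \<in> measurable M (borel \<Otimes>\<^sub>M borel)"
  unfolding step_def by measurable

lemma torus_bounded_shear_step:
  "torus_bounded B f \<Longrightarrow> torus_bounded B (\<lambda>x. f (shear_step t x))"
  unfolding shear_step_def
  by (intro torus_bounded_shear1 torus_bounded_shear2) (auto simp: v1_periodic v2_periodic)

lemma torus_mean_shear_step:
  assumes "torus_bounded B f"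
  shows "torus_mean (\<lambda>x. f (shear_step t x)) = torus_mean f"
  unfolding shear_step_def
  using torus_mean_shear1[OF torus_bounded_shear2[OF assms]] torus_mean_shear2[OF assms]
  by (simp add: v2_periodic)

lemma transition_eq:
  assumes "torus_bounded B f"
  shows "transition t f x = gauss_conv1 s (gauss_conv2 s f) (shear_step t x)"
proof -
  note f = torus_boundedD[OF assms]
  have [measurable]: "f \<in> borel_measurable (borel \<Otimes>\<^sub>M borel)" by (rule f(1))
  have "integrable (gauss \<Otimes>\<^sub>M gauss) (\<lambda>w. f (step t x w))"
    using f(4) by (intro Gauss2.integrable_bounded[where B=B]) (auto simp: step_def)
  from Gauss2.integral_fst'[OF this] show ?thesis
    unfolding transition_def gauss_conv1_def gauss_conv2_def step_def by simp
qed

lemma transition_fun_eq: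
  "torus_bounded B f \<Longrightarrow> transition t f = (\<lambda>x. gauss_conv1 s (gauss_conv2 s f) (shear_step t x))"
  using transition_eq by (simp add: fun_eq_iff)

lemma torus_bounded_transition:
  "torus_bounded B f \<Longrightarrow> torus_bounded B (transition t f)"
  unfolding transition_fun_eq
  by (intro torus_bounded_shear_step torus_bounded_gauss_conv1 torus_bounded_gauss_conv2)

lemma torus_mean_transition:
  assumes "torus_bounded B f"
  shows "torus_mean (transition t f) = torus_mean f"
  unfolding transition_fun_eq[OF assms]
  using torus_mean_shear_step[OF torus_bounded_gauss_conv1[OF torus_bounded_gauss_conv2[OF assms]]]
    torus_mean_gauss_conv1[OF torus_bounded_gauss_conv2[OF assms]] torus_mean_gauss_conv2[OF assms]
  by simp

lemma contraction_rate_bounds: "0 \<le> contraction_rate" "contraction_rate < 1"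
  unfolding contraction_rate_def using doeblin_const_pos[OF s_pos] doeblin_const_le_half[of s] by auto

lemma transition_contraction:
  assumes "torus_bounded B f" and "torus_mean f = 0"
  shows "torus_bounded (contraction_rate * B) (transition t f)"
  using torus_bounded_transition[OF assms(1)] gauss_conv_contraction[OF assms s_pos]
  unfolding torus_bounded_def contraction_rate_def by (simp add: transition_eq[OF assms(1)])

fun transition_iter :: "nat \<Rightarrow> nat \<Rightarrow> (real \<times> real \<Rightarrow> real) \<Rightarrow> real \<times> real \<Rightarrow> real" where
  "transition_iter j 0 f = f"
| "transition_iter j (Suc n) f = transition (half_time j) (transition_iter (Suc j) n f)"

lemma transition_iter_contraction:
  assumes "torus_bounded B f" and "torus_mean f = 0"
  shows "torus_bounded (contraction_rate ^ n * B) (transition_iter j n f)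
    \<and> torus_mean (transition_iter j n f) = 0"
  using assms
proof (induction n arbitrary: j)
  case (Suc n)
  then have "torus_bounded (contraction_rate ^ n * B) (transition_iter (Suc j) n f)"
    and "torus_mean (transition_iter (Suc j) n f) = 0"
    by auto
  from transition_contraction[OF this] torus_mean_transition[OF this(1)] this(2) show ?case
    by (simp add: ac_simps)
qed simp

fun chain :: "nat \<Rightarrow> real \<times> real \<Rightarrow> (nat \<Rightarrow> real \<times> real) \<Rightarrow> nat \<Rightarrow> real \<times> real" where
  "chain j X0 \<omega> 0 = X0"
| "chain j X0 \<omega> (Suc n) = step (half_time (j + n)) (chain j X0 \<omega> n) (\<omega> n)"

lemma chain_Suc_shift:
  "chain j X0 \<omega> (Suc n) = chain (Suc j) (step (half_time j) X0 (\<omega> 0)) (\<lambda>i. \<omega> (Suc i)) n"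
  by (induction n) auto

lemma measurable_chain_joint [measurable]:
  "(\<lambda>p. chain j (fst p) (snd p) n) \<in> measurable ((borel \<Otimes>\<^sub>M borel) \<Otimes>\<^sub>M Noise.S) (borel \<Otimes>\<^sub>M borel)"
proof (induction n)
  case (Suc n)
  have [measurable]: "(\<lambda>p. snd p n) \<in> measurable ((borel \<Otimes>\<^sub>M borel) \<Otimes>\<^sub>M Noise.S) (borel \<Otimes>\<^sub>M borel)"
    by measurable
  from Suc show ?case by simp
qed simp

lemma measurable_chain [measurable (raw)]:
  assumes "f \<in> measurable M (borel \<Otimes>\<^sub>M borel)" and "g \<in> measurable M Noise.S"
  shows "(\<lambda>x. chain j (f x) (g x) n) \<in> measurable M (borel \<Otimes>\<^sub>M borel)"
  using measurable_compose[OF measurable_Pair[OF assms] measurable_chain_joint[of j n]] by simp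

lemma measurable_chain_noise [measurable]:
  "(\<lambda>\<omega>. chain j X0 \<omega> n) \<in> measurable Noise.S (borel \<Otimes>\<^sub>M borel)"
  by (rule measurable_chain) (simp_all add: measurable_const space_pair_measure)

lemma measurable_chain_after_step:
  assumes [measurable]: "f \<in> borel_measurable (borel \<Otimes>\<^sub>M borel)"
  shows "(\<lambda>p. f (chain j (step t X0 (fst p)) (snd p) n)) \<in> borel_measurable ((gauss \<Otimes>\<^sub>M gauss) \<Otimes>\<^sub>M Noise.S)"
proof -
  have [measurable]: "fst \<in> measurable ((gauss \<Otimes>\<^sub>M gauss) \<Otimes>\<^sub>M Noise.S) (borel \<Otimes>\<^sub>M borel)"
    by (subst measurable_cong_sets[of _ _ "borel \<Otimes>\<^sub>M borel" "gauss \<Otimes>\<^sub>M gauss"]) auto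
  have [measurable]: "(\<lambda>p. X0) \<in> measurable ((gauss \<Otimes>\<^sub>M gauss) \<Otimes>\<^sub>M Noise.S) (borel \<Otimes>\<^sub>M borel)"
    by (simp add: space_pair_measure)
  show ?thesis by measurable
qed

lemma integral_chain:
  assumes f: "torus_bounded B f"
  shows "(\<integral>\<omega>. f (chain j X0 \<omega> n) \<partial>Noise.S) = transition_iter j n f X0"
proof (induction n arbitrary: j X0)
  case (Suc n)
  note f' = torus_boundedD[OF f]
  have [measurable]: "f \<in> borel_measurable (borel \<Otimes>\<^sub>M borel)" by (rule f'(1))
  let ?g = "\<lambda>p. f (chain (Suc j) (step (half_time j) X0 (fst p)) (snd p) n)"
  \<comment> \<open>split the noise sequence into its first element and the independent tail\<close>
  have "(\<integral>\<omega>. f (chain j X0 \<omega> (Suc n)) \<partial>Noise.S)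
      = (\<integral>\<omega>. f (chain j X0 \<omega> (Suc n)) \<partial>distr ((gauss \<Otimes>\<^sub>M gauss) \<Otimes>\<^sub>M Noise.S) Noise.S (\<lambda>p. case_nat (fst p) (snd p)))"
    using Noise.PiM_iter by (simp add: case_prod_beta')
  also have "\<dots> = (\<integral>p. f (chain j X0 (case_nat (fst p) (snd p)) (Suc n)) \<partial>((gauss \<Otimes>\<^sub>M gauss) \<Otimes>\<^sub>M Noise.S))"
    by (rule integral_distr) measurable
  also have "\<dots> = (\<integral>p. ?g p \<partial>((gauss \<Otimes>\<^sub>M gauss) \<Otimes>\<^sub>M Noise.S))"
    by (subst chain_Suc_shift) simp
  also have "\<dots> = (\<integral>w. (\<integral>\<omega>. f (chain (Suc j) (step (half_time j) X0 w) \<omega> n) \<partial>Noise.S) \<partial>(gauss \<Otimes>\<^sub>M gauss))"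
  proof -
    have "integrable ((gauss \<Otimes>\<^sub>M gauss) \<Otimes>\<^sub>M Noise.S) ?g"
      using measurable_chain_after_step[OF f'(1), of "Suc j" "half_time j" X0 n] f'(4)
      by (intro Gauss2_Noise.integrable_bounded[where B=B]) auto
    from Gauss2_Noise.integral_fst'[OF this] show ?thesis by simp
  qed
  also have "\<dots> = transition_iter j (Suc n) f X0"
    using Suc by (simp add: transition_def)
  finally show ?case .
qed simp

end

section \<open>Expectations along the chain\<close>

lemma abs_coord_le:
  fixes x :: "real \<times> real"
  shows "L \<in> {fst, snd} \<Longrightarrow> \<bar>L x\<bar> \<le> \<bar>fst x\<bar> + \<bar>snd x\<bar>"
  using abs_ge_zero[of "fst x"] abs_ge_zero[of "snd x"] by auto

lemma geometric_sum_le: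
  fixes q :: real
  assumes "0 \<le> q" "q < 1"
  shows "(\<Sum>k<n. q ^ k) \<le> 1 / (1 - q)"
proof -
  have "(\<Sum>k<n. q ^ k) = (1 - q ^ n) / (1 - q)"
    using assms by (simp add: sum_gp_strict)
  also have "\<dots> \<le> 1 / (1 - q)"
    using assms by (intro divide_right_mono) auto
  finally show ?thesis .
qed

context split_step_scheme
begin

definition drift1 :: "nat \<Rightarrow> real \<times> real \<Rightarrow> real" where
  "drift1 k x = v1 (half_time k) (snd x)"

definition drift2 :: "nat \<Rightarrow> real \<times> real \<Rightarrow> real" where
  "drift2 k x = v2 (half_time k) (fst (shear1 (\<lambda>y. v1 (half_time k) y * dt) x))"

lemma fst_step: "fst (step (half_time k) x w) = fst x + dt * drift1 k x + s * fst w"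
  by (simp add: step_def shear_step_def shear1_def shear2_def drift1_def)

lemma snd_step: "snd (step (half_time k) x w) = snd x + dt * drift2 k x + s * snd w"
  by (simp add: step_def shear_step_def shear1_def shear2_def drift2_def)

lemma torus_bounded_drift1: "torus_bounded V1 (drift1 k)"
  unfolding torus_bounded_def drift1_def by (auto simp: v1_periodic v1_bound)

lemma torus_mean_drift1: "torus_mean (drift1 k) = 0"
  unfolding torus_mean_def drift1_def by (simp add: v1_mean)

lemma torus_bounded_drift2: "torus_bounded V2 (drift2 k)"
proof -
  have "torus_bounded V2 (\<lambda>x. v2 (half_time k) (fst x))"
    unfolding torus_bounded_def by (auto simp: v2_periodic v2_bound)
  then show ?thesis
    unfolding drift2_def by (rule torus_bounded_shear1) (auto simp: v1_periodic)
qed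

lemma torus_mean_drift2: "torus_mean (drift2 k) = 0"
proof -
  have "torus_bounded V2 (\<lambda>x. v2 (half_time k) (fst x))"
    unfolding torus_bounded_def by (auto simp: v2_periodic v2_bound)
  from torus_mean_shear1[OF this] show ?thesis
    unfolding drift2_def by (simp add: torus_mean_def v2_mean)
qed

lemma scheme_eq_chain:
  assumes "dt = 1 / real N" and "s = \<sigma> * sqrt dt"
  shows "scheme v1 v2 \<sigma> N X0 \<omega> n = chain 0 X0 \<omega> n"
  by (induction n)
     (simp_all add: assms[symmetric] step_def shear_step_def shear1_def shear2_def half_time_def Let_def
       split: prod.splits)

lemma chain_abs_le:
  "\<bar>fst (chain j X0 \<omega> n)\<bar> + \<bar>snd (chain j X0 \<omega> n)\<bar> \<le>
     \<bar>fst X0\<bar> + \<bar>snd X0\<bar> + real n * ((V1 + V2) * dt) + s * (\<Sum>k<n. \<bar>fst (\<omega> k)\<bar> + \<bar>snd (\<omega> k)\<bar>)"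
proof (induction n)
  case (Suc n)
  let ?X = "chain j X0 \<omega> n"
  have "\<bar>dt * drift1 (j + n) ?X\<bar> \<le> V1 * dt" "\<bar>dt * drift2 (j + n) ?X\<bar> \<le> V2 * dt"
    using v1_bound v2_bound dt_pos unfolding drift1_def drift2_def
    by (simp_all add: abs_mult mult.commute mult_right_mono)
  moreover have "\<bar>s * fst (\<omega> n)\<bar> = s * \<bar>fst (\<omega> n)\<bar>" "\<bar>s * snd (\<omega> n)\<bar> = s * \<bar>snd (\<omega> n)\<bar>"
    using s_pos by (auto simp: abs_mult)
  ultimately have "\<bar>fst (chain j X0 \<omega> (Suc n))\<bar> + \<bar>snd (chain j X0 \<omega> (Suc n))\<bar>
      \<le> (\<bar>fst ?X\<bar> + \<bar>snd ?X\<bar>) + ((V1 + V2) * dt + s * (\<bar>fst (\<omega> n)\<bar> + \<bar>snd (\<omega> n)\<bar>))"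
    unfolding chain.simps fst_step snd_step by (simp add: algebra_simps) linarith
  also have "\<dots> \<le> \<bar>fst X0\<bar> + \<bar>snd X0\<bar> + real n * ((V1 + V2) * dt) + s * (\<Sum>k<n. \<bar>fst (\<omega> k)\<bar> + \<bar>snd (\<omega> k)\<bar>)
      + ((V1 + V2) * dt + s * (\<bar>fst (\<omega> n)\<bar> + \<bar>snd (\<omega> n)\<bar>))"
    using Suc.IH by (rule add_right_mono)
  also have "\<dots> = \<bar>fst X0\<bar> + \<bar>snd X0\<bar> + real (Suc n) * ((V1 + V2) * dt)
      + s * (\<Sum>k<Suc n. \<bar>fst (\<omega> k)\<bar> + \<bar>snd (\<omega> k)\<bar>)"
    by (simp add: distrib_left distrib_right)
  finally show ?case .
qed simp

lemma integrable_chain_coord: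
  assumes L: "L \<in> {fst, snd}"
  shows "integrable Noise.S (\<lambda>\<omega>. L (chain j X0 \<omega> n))"
proof (rule Bochner_Integration.integrable_bound)
  let ?R = "\<lambda>\<omega>. \<bar>fst X0\<bar> + \<bar>snd X0\<bar> + real n * ((V1 + V2) * dt) + s * (\<Sum>k<n. \<bar>fst (\<omega> k)\<bar> + \<bar>snd (\<omega> k)\<bar>)"
  show "integrable Noise.S ?R"
    using integrable_noise_coord[of fst] integrable_noise_coord[of snd]
    by (intro Bochner_Integration.integrable_add integrable_mult_right integrable_sum integrable_abs) auto
  show "AE \<omega> in Noise.S. norm (L (chain j X0 \<omega> n)) \<le> norm (?R \<omega>)"
  proof (rule AE_I2)
    fix \<omega>
    have "\<bar>L (chain j X0 \<omega> n)\<bar> \<le> ?R \<omega>"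
      by (rule order_trans[OF abs_coord_le[OF L] chain_abs_le])
    then show "norm (L (chain j X0 \<omega> n)) \<le> norm (?R \<omega>)"
      unfolding real_norm_def by (rule order_trans[OF _ abs_ge_self])
  qed
  have "L \<in> borel_measurable (borel \<Otimes>\<^sub>M borel)"
    using L measurable_fst measurable_snd by blast
  then show "(\<lambda>\<omega>. L (chain j X0 \<omega> n)) \<in> borel_measurable Noise.S"
    by (rule measurable_compose[OF measurable_chain_noise])
qed

lemma integral_chain_coord:
  assumes L: "L \<in> {fst, snd}"
    and increment: "\<And>k x w. L (step (half_time k) x w) = L x + dt * f k x + s * L w"
    and f: "\<And>k. torus_bounded V (f k)"
  shows "(\<integral>\<omega>. L (chain 0 X0 \<omega> n) \<partial>Noise.S) = L X0 + dt * (\<Sum>k<n. transition_iter 0 k (f k) X0)"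
proof (induction n)
  case (Suc n)
  note fn = torus_boundedD[OF f[of n]]
  have [measurable]: "f n \<in> borel_measurable (borel \<Otimes>\<^sub>M borel)" by (rule fn(1))
  have int_drift: "integrable Noise.S (\<lambda>\<omega>. dt * f n (chain 0 X0 \<omega> n))"
    using fn(4) by (intro integrable_mult_right Noise.P.integrable_bounded[where B=V]) auto
  have "(\<integral>\<omega>. L (chain 0 X0 \<omega> (Suc n)) \<partial>Noise.S)
      = (\<integral>\<omega>. L (chain 0 X0 \<omega> n) + dt * f n (chain 0 X0 \<omega> n) + s * L (\<omega> n) \<partial>Noise.S)"
    by (simp only: chain.simps add_0_left increment)
  also have "\<dots> = (\<integral>\<omega>. L (chain 0 X0 \<omega> n) \<partial>Noise.S) + (\<integral>\<omega>. dt * f n (chain 0 X0 \<omega> n) \<partial>Noise.S)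
      + (\<integral>\<omega>. s * L (\<omega> n) \<partial>Noise.S)"
  proof -
    note a = integrable_chain_coord[OF L, of 0 X0 n]
      and c = integrable_mult_right[OF integrable_noise_coord[OF L, of n], of s]
    show ?thesis
      using Bochner_Integration.integral_add[OF Bochner_Integration.integrable_add[OF a int_drift] c]
        Bochner_Integration.integral_add[OF a int_drift]
      by linarith
  qed
  also have "\<dots> = L X0 + dt * (\<Sum>k<n. transition_iter 0 k (f k) X0) + dt * transition_iter 0 n (f n) X0"
    using Suc.IH integral_chain[OF f, of n 0 X0] integral_noise_coord[OF L, of n] by simp
  finally show ?case
    by (simp add: distrib_left)
qed simp

lemma integrable_chain_coord_product:
  assumes "prob_space \<mu>" and sets_\<mu>: "sets \<mu> = sets borel"
    and int: "integrable \<mu> fst" "integrable \<mu> snd" and L: "L \<in> {fst, snd}"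
  shows "integrable (\<mu> \<Otimes>\<^sub>M Noise.S) (\<lambda>p. L (chain 0 (fst p) (snd p) n))"
proof -
  interpret M: prob_space \<mu> by fact
  interpret pair_prob_space \<mu> Noise.S ..
  have sets_\<mu>': "sets \<mu> = sets (borel \<Otimes>\<^sub>M borel)"
    unfolding borel_prod using sets_\<mu> by simp
  have fst_meas: "fst \<in> measurable (\<mu> \<Otimes>\<^sub>M Noise.S) (borel \<Otimes>\<^sub>M borel)"
    using measurable_fst[of \<mu> Noise.S] measurable_cong_sets[OF refl sets_\<mu>', of "\<mu> \<Otimes>\<^sub>M Noise.S"]
    by simp
  have L_meas: "L \<in> borel_measurable (borel \<Otimes>\<^sub>M borel)"
    using L measurable_fst measurable_snd by blast
  let ?R = "\<lambda>p. \<bar>fst (fst p)\<bar> + \<bar>snd (fst p)\<bar> + real n * ((V1 + V2) * dt)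
    + s * (\<Sum>k<n. \<bar>fst (snd p k)\<bar> + \<bar>snd (snd p k)\<bar>)"
  show ?thesis
  proof (rule Bochner_Integration.integrable_bound)
    have "integrable Noise.S (\<lambda>\<omega>. fst (\<omega> k))" "integrable Noise.S (\<lambda>\<omega>. snd (\<omega> k))" for k
      by (simp_all add: integrable_noise_coord)
    then show "integrable (\<mu> \<Otimes>\<^sub>M Noise.S) ?R"
      using int by (intro Bochner_Integration.integrable_add integrable_mult_right integrable_sum
        integrable_pair_fst integrable_pair_snd integrable_abs integrable_const) auto
    show "AE p in \<mu> \<Otimes>\<^sub>M Noise.S. norm (L (chain 0 (fst p) (snd p) n)) \<le> norm (?R p)"
    proof (rule AE_I2)
      fix p :: "(real \<times> real) \<times> (nat \<Rightarrow> real \<times> real)"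
      have "\<bar>L (chain 0 (fst p) (snd p) n)\<bar> \<le> ?R p"
        by (rule order_trans[OF abs_coord_le[OF L] chain_abs_le])
      then show "norm (L (chain 0 (fst p) (snd p) n)) \<le> norm (?R p)"
        unfolding real_norm_def by (rule order_trans[OF _ abs_ge_self])
    qed
    show "(\<lambda>p. L (chain 0 (fst p) (snd p) n)) \<in> borel_measurable (\<mu> \<Otimes>\<^sub>M Noise.S)"
      using measurable_chain[OF fst_meas measurable_snd] L_meas by (rule measurable_compose)
  qed
qed

lemma
  assumes "prob_space \<mu>" and "sets \<mu> = sets borel"
    and f: "torus_bounded V f" and mean: "torus_mean f = 0"
  shows integrable_transition_iter: "integrable \<mu> (transition_iter j k f)"
    and abs_integral_transition_iter_le: "\<bar>\<integral>x. transition_iter j k f x \<partial>\<mu>\<bar> \<le> contraction_rate ^ k * V"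
proof -
  interpret M: prob_space \<mu> by fact
  note iter = torus_boundedD[OF conjunct1[OF transition_iter_contraction[OF f mean, of k j]]]
  have meas: "transition_iter j k f \<in> borel_measurable \<mu>"
    using iter(1) assms(2) by (simp add: borel_prod[symmetric] cong: measurable_cong_sets)
  show "integrable \<mu> (transition_iter j k f)"
    using iter(4) by (intro M.integrable_bounded[OF meas, where B="contraction_rate ^ k * V"]) auto
  show "\<bar>\<integral>x. transition_iter j k f x \<partial>\<mu>\<bar> \<le> contraction_rate ^ k * V"
    using iter(4) by (intro M.abs_integral_le_bound[OF meas]) auto
qed

lemma abs_sum_integral_transition_iter_le:
  assumes "prob_space \<mu>" and "sets \<mu> = sets borel"
    and f: "\<And>k. torus_bounded V (f k)" and mean: "\<And>k. torus_mean (f k) = 0"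
  shows "\<bar>\<Sum>k<n. \<integral>x. transition_iter 0 k (f k) x \<partial>\<mu>\<bar> \<le> V / doeblin_const s"
proof -
  have V: "0 \<le> V" by (rule torus_bounded_nonneg[OF f])
  have "\<bar>\<Sum>k<n. \<integral>x. transition_iter 0 k (f k) x \<partial>\<mu>\<bar> \<le> (\<Sum>k<n. contraction_rate ^ k * V)"
    using abs_integral_transition_iter_le[OF assms(1,2) f mean]
    by (intro order_trans[OF sum_abs] sum_mono)
  also have "\<dots> = (\<Sum>k<n. contraction_rate ^ k) * V"
    by (simp add: sum_distrib_right)
  also have "\<dots> \<le> 1 / (1 - contraction_rate) * V"
    using geometric_sum_le[OF contraction_rate_bounds] V by (rule mult_right_mono)
  also have "\<dots> = V / doeblin_const s"
    by (simp add: contraction_rate_def)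
  finally show ?thesis .
qed

lemma abs_expectation_chain_coord_le:
  assumes "prob_space \<mu>" and sets_\<mu>: "sets \<mu> = sets borel"
    and int: "integrable \<mu> fst" "integrable \<mu> snd" and L: "L \<in> {fst, snd}"
    and increment: "\<And>k x w. L (step (half_time k) x w) = L x + dt * f k x + s * L w"
    and f: "\<And>k. torus_bounded V (f k)" and mean: "\<And>k. torus_mean (f k) = 0"
  shows "\<bar>\<integral>p. L (chain 0 (fst p) (snd p) n) \<partial>(\<mu> \<Otimes>\<^sub>M Noise.S)\<bar>
    \<le> \<bar>\<integral>x. L x \<partial>\<mu>\<bar> + dt / doeblin_const s * V"
proof -
  interpret M: prob_space \<mu> by fact
  interpret pair_prob_space \<mu> Noise.S ..
  have "integrable \<mu> L"
    using L int by auto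
  then have "(\<integral>p. L (chain 0 (fst p) (snd p) n) \<partial>(\<mu> \<Otimes>\<^sub>M Noise.S))
      = (\<integral>x. L x \<partial>\<mu>) + dt * (\<Sum>k<n. \<integral>x. transition_iter 0 k (f k) x \<partial>\<mu>)"
    using integral_fst'[OF integrable_chain_coord_product[OF assms(1-5)]]
      integral_chain_coord[OF L increment f] integrable_transition_iter[OF assms(1,2) f mean]
    by simp
  moreover have "dt * \<bar>\<Sum>k<n. \<integral>x. transition_iter 0 k (f k) x \<partial>\<mu>\<bar> \<le> dt * (V / doeblin_const s)"
    using abs_sum_integral_transition_iter_le[OF assms(1,2) f mean] dt_pos by (intro mult_left_mono) auto
  ultimately show ?thesis
    using dt_pos by (auto simp: abs_mult intro!: order_trans[OF abs_triangle_ineq])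
qed

end

lemma smooth2_continuous: "smooth2 v \<Longrightarrow> continuous_on UNIV (\<lambda>p. v (fst p) (snd p))"
  by (cases rule: smooth2.cases) auto

lemma continuous_on_slice:
  fixes v :: "'a::topological_space \<Rightarrow> 'b::topological_space \<Rightarrow> 'c::topological_space"
  assumes "continuous_on UNIV (\<lambda>p. v (fst p) (snd p))"
  shows "continuous_on UNIV (v t)"
proof -
  have "continuous_on UNIV (Pair t :: 'b \<Rightarrow> 'a \<times> 'b)"
    by (intro continuous_intros)
  then show ?thesis
    using continuous_on_compose2[OF assms, of UNIV "\<lambda>y. (t, y)"] by auto
qed

lemma abs_le_supnorm2:
  fixes v :: "real \<Rightarrow> real \<Rightarrow> real"
  assumes cont: "continuous_on UNIV (\<lambda>p. v (fst p) (snd p))"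
    and per_t: "\<And>t x. v (t + 1) x = v t x" and per_x: "\<And>t x. v t (x + 1) = v t x"
  shows "\<bar>v t x\<bar> \<le> supnorm2 v"
proof -
  have "compact ((\<lambda>p. v (fst p) (snd p)) ` ({0..1} \<times> {0..1}))"
    by (intro compact_continuous_image continuous_on_subset[OF cont] compact_Times) auto
  then obtain M where M: "\<And>p. p \<in> {0..1} \<times> {0..1} \<Longrightarrow> \<bar>v (fst p) (snd p)\<bar> \<le> M"
    by (meson compact_imp_bounded bounded_real image_eqI)
  have reduce: "v t x = v (t - of_int \<lfloor>t\<rfloor>) (x - of_int \<lfloor>x\<rfloor>)" for t x
    using periodic_add_of_int[of "\<lambda>t. v t x", OF per_t, of "t - of_int \<lfloor>t\<rfloor>" "\<lfloor>t\<rfloor>"]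
      periodic_add_of_int[of "v (t - of_int \<lfloor>t\<rfloor>)", OF per_x, of "x - of_int \<lfloor>x\<rfloor>" "\<lfloor>x\<rfloor>"]
    by simp
  have "\<bar>v t x\<bar> \<le> M" for t x
  proof -
    have "0 \<le> t - of_int \<lfloor>t\<rfloor>" "t - of_int \<lfloor>t\<rfloor> \<le> 1" "0 \<le> x - of_int \<lfloor>x\<rfloor>" "x - of_int \<lfloor>x\<rfloor> \<le> 1"
      by linarith+
    then show ?thesis
      using M[of "(t - of_int \<lfloor>t\<rfloor>, x - of_int \<lfloor>x\<rfloor>)"] reduce[of t x] by simp
  qed
  then have bdd: "bdd_above ((\<lambda>p. \<bar>v (fst p) (snd p)\<bar>) ` UNIV)"
    by (auto intro!: bdd_aboveI)
  show ?thesis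
    unfolding supnorm2_def using cSUP_upper[OF _ bdd, of "(t, x)"] by simp
qed

lemma integral_unif01_eq_integral:
  fixes h :: "real \<Rightarrow> real"
  assumes cont: "continuous_on UNIV h"
  shows "(\<integral>x. h x \<partial>unif01) = integral {0..1} h"
proof -
  have [measurable]: "h \<in> borel_measurable borel"
    by (rule borel_measurable_continuous_onI[OF cont])
  have "(\<integral>x. h x \<partial>unif01) = (\<integral>x. indicator {0..<1} x * h x \<partial>lborel)"
    by (rule integral_unif01) simp
  also have "\<dots> = (LINT x:{0..1}|lborel. h x)"
    unfolding set_lebesgue_integral_def
    using AE_lborel_singleton[of 1] by (intro integral_cong_AE) (auto simp: indicator_def)
  also have "\<dots> = integral {0..1} h"
    by (rule set_borel_integral_eq_integral(2)[OF borel_integrable_atLeastAtMost'])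
       (rule continuous_on_subset[OF cont], simp)
  finally show ?thesis .
qed

lemma split_step_scheme_smooth:
  fixes v1 v2 :: "real \<Rightarrow> real \<Rightarrow> real"
  assumes "dt > 0" and "s > 0" and "smooth2 v1" and "smooth2 v2"
    and "\<And>t x. v1 (t + 1) x = v1 t x" and "\<And>t x. v1 t (x + 1) = v1 t x"
    and "\<And>t x. v2 (t + 1) x = v2 t x" and "\<And>t x. v2 t (x + 1) = v2 t x"
    and "\<And>t. integral {0..1} (v1 t) = 0" and "\<And>t. integral {0..1} (v2 t) = 0"
  shows "split_step_scheme v1 v2 dt s (supnorm2 v1) (supnorm2 v2)"
proof -
  note cont1 = smooth2_continuous[OF assms(3)] and cont2 = smooth2_continuous[OF assms(4)]
  show ?thesis
    using assms abs_le_supnorm2[OF cont1] abs_le_supnorm2[OF cont2]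
      integral_unif01_eq_integral[OF continuous_on_slice[OF cont1]]
      integral_unif01_eq_integral[OF continuous_on_slice[OF cont2]]
      borel_measurable_continuous_onI[OF continuous_on_slice[OF cont1]]
      borel_measurable_continuous_onI[OF continuous_on_slice[OF cont2]]
    by unfold_locales auto
qed

theorem mainTheorem3:
  fixes \<sigma> :: real and N :: nat and v1 v2 :: "real \<Rightarrow> real \<Rightarrow> real"
  assumes "\<sigma> > 0" and "N \<ge> 1"
    and "smooth2 v1" and "smooth2 v2"
    and "\<And>t x. v1 (t + 1) x = v1 t x" and "\<And>t x. v1 t (x + 1) = v1 t x"
    and "\<And>t x. v2 (t + 1) x = v2 t x" and "\<And>t x. v2 t (x + 1) = v2 t x"
    and "\<And>t. integral {0..1} (\<lambda>x2. v1 t x2) = 0"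
    and "\<And>t. integral {0..1} (\<lambda>x1. v2 t x1) = 0"
  shows "\<exists>C1::real. \<forall>\<mu> :: (real \<times> real) measure.
           prob_space \<mu> \<and> sets \<mu> = sets borel \<and> integrable \<mu> fst \<and> integrable \<mu> snd \<longrightarrow>
           (\<forall>n. \<bar>\<integral>p. fst (scheme v1 v2 \<sigma> N (fst p) (snd p) n) \<partial>chain_space \<mu>\<bar>
                  \<le> \<bar>\<integral>x. fst x \<partial>\<mu>\<bar> + C1 * supnorm2 v1
              \<and> \<bar>\<integral>p. snd (scheme v1 v2 \<sigma> N (fst p) (snd p) n) \<partial>chain_space \<mu>\<bar>
                  \<le> \<bar>\<integral>x. snd x \<partial>\<mu>\<bar> + C1 * supnorm2 v2)"
proof -
  define dt where "dt = 1 / real N"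
  define s where "s = \<sigma> * sqrt dt"
  have "dt > 0" "s > 0"
    using assms(1,2) by (simp_all add: dt_def s_def)
  then interpret split_step_scheme v1 v2 dt s "supnorm2 v1" "supnorm2 v2"
    using assms(3-10) by (intro split_step_scheme_smooth) auto
  note scheme_eq = scheme_eq_chain[OF dt_def s_def]
  show ?thesis
  proof (intro exI[of _ "dt / doeblin_const s"] allI impI conjI)
    fix \<mu> :: "(real \<times> real) measure" and n
    assume "prob_space \<mu> \<and> sets \<mu> = sets borel \<and> integrable \<mu> fst \<and> integrable \<mu> snd"
    then have \<mu>: "prob_space \<mu>" "sets \<mu> = sets borel" "integrable \<mu> fst" "integrable \<mu> snd"
      by auto
    show "\<bar>\<integral>p. fst (scheme v1 v2 \<sigma> N (fst p) (snd p) n) \<partial>chain_space \<mu>\<bar>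
        \<le> \<bar>\<integral>x. fst x \<partial>\<mu>\<bar> + dt / doeblin_const s * supnorm2 v1"
      using abs_expectation_chain_coord_le[OF \<mu>, of fst drift1] fst_step torus_bounded_drift1 torus_mean_drift1
      unfolding chain_space_def noise_space_eq scheme_eq by simp
    show "\<bar>\<integral>p. snd (scheme v1 v2 \<sigma> N (fst p) (snd p) n) \<partial>chain_space \<mu>\<bar>
        \<le> \<bar>\<integral>x. snd x \<partial>\<mu>\<bar> + dt / doeblin_const s * supnorm2 v2"
      using abs_expectation_chain_coord_le[OF \<mu>, of snd drift2] snd_step torus_bounded_drift2 torus_mean_drift2
      unfolding chain_space_def noise_space_eq scheme_eq by simp
  qed
qed

end
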